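(* Let $0\le\varepsilon<\frac12$ and consider a $(1-\varepsilon)$-satisfiable instance of \textsc{Min-Lin-Eq$(q)$-Full} on the complete graph with $n$ vertices and $m=\binom n2$ edges. Then the Voting Algorithm returns an assignment with at most $(\varepsilon+c_\varepsilon\varepsilon^2)m$ unsatisfied constraints, where $c_\varepsilon$ is a quantity depending on $\varepsilon$ with $\lim_{\varepsilon\to0}c_\varepsilon=16$.
   Context: \textsc{Min-Lin-Eq$(q)$-Full}: given a complete simple graph $G=(V,E)$, $n=|V|$, $m=\binom n2$, a positive integer $q$, and for each ordered pair $(u,v)$ of distinct vertices an integer $c_{uv}\in\{0,\dots,q-1\}$ with $c_{vu}\equiv -c_{uv}\pmod q$, each edge $uv$ carries the constraint $x_u-x_v\equiv c_{uv}\pmod q$ on assignments $x:V\to\{0,\dots,q-1\}$; the goal is to minimize the number of violated constraints. An instance is $(1-\varepsilon)$-satisfiable if some assignment satisfies at least $(1-\varepsilon)m$ constraints (equivalently $\varepsilon$ may be taken as $\mathrm{OPT_{val}}/m$). Voting Algorithm: for each choice of pivot $p\in V$: (1) label $p$ with $0$ and give each vertex $v\neq p$ the temporary label $\mathrm{TEMP}(v)=c_{vp}$; (2) for each vertex $v$, every vertex $u\notin\{p,v\}$ casts the vote $(c_{vu}+\mathrm{TEMP}(u))\bmod q$ for $v$; (3) each vertex $v$ receives as final label $\mathrm{FINAL}(v)$ a label occurring most often among its votes (ties broken arbitrarily). (4) Output, among all choices of $p$, the FINAL assignment violating the fewest constraints. *)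

theory Defs
  imports Complex_Main
begin

text \<open>Vertices of the complete graph are 0,...,n-1.  An instance is given by
  the constants c u v (for ordered pairs u \<noteq> v), an integer in {0..q-1},
  with c v u = -c u v (mod q).  Edge uv carries x u - x v = c u v (mod q).\<close>

definition valid_instance :: "nat \<Rightarrow> int \<Rightarrow> (nat \<Rightarrow> nat \<Rightarrow> int) \<Rightarrow> bool" where
  "valid_instance n q c \<longleftrightarrow> q > 0 \<and>
     (\<forall>u<n. \<forall>v<n. u \<noteq> v \<longrightarrow> c u v \<in> {0..<q} \<and> c v u mod q = (- c u v) mod q)"

definition assignment :: "nat \<Rightarrow> int \<Rightarrow> (nat \<Rightarrow> int) \<Rightarrow> bool" where
  "assignment n q x \<longleftrightarrow> (\<forall>v<n. x v \<in> {0..<q})"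

definition violations :: "nat \<Rightarrow> int \<Rightarrow> (nat \<Rightarrow> nat \<Rightarrow> int) \<Rightarrow> (nat \<Rightarrow> int) \<Rightarrow> nat" where
  "violations n q c x = card {e. \<exists>u v. e = {u, v} \<and> u < n \<and> v < n \<and> u \<noteq> v \<and>
                                   (x u - x v) mod q \<noteq> c u v mod q}"

text \<open>Number of votes equal to label a received by vertex v when p is the pivot:
  each u \<notin> {p,v} votes (c v u + TEMP u) mod q with TEMP u = c u p.\<close>
definition vote_count :: "nat \<Rightarrow> int \<Rightarrow> (nat \<Rightarrow> nat \<Rightarrow> int) \<Rightarrow> nat \<Rightarrow> nat \<Rightarrow> int \<Rightarrow> nat" where
  "vote_count n q c p v a = card {u. u < n \<and> u \<noteq> p \<and> u \<noteq> v \<and> (c v u + c u p) mod q = a}"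

definition plurality_label :: "nat \<Rightarrow> int \<Rightarrow> (nat \<Rightarrow> nat \<Rightarrow> int) \<Rightarrow> nat \<Rightarrow> nat \<Rightarrow> int \<Rightarrow> bool" where
  "plurality_label n q c p v a \<longleftrightarrow> a \<in> {0..<q} \<and>
     (\<forall>b\<in>{0..<q}. vote_count n q c p v b \<le> vote_count n q c p v a)"

text \<open>x is a possible output of the Voting Algorithm (for some arbitrary tie-breaking F):
  F p is the FINAL assignment for pivot p, and the output is a FINAL assignment
  with the fewest violated constraints among all pivots.\<close>
definition voting_output :: "nat \<Rightarrow> int \<Rightarrow> (nat \<Rightarrow> nat \<Rightarrow> int) \<Rightarrow> (nat \<Rightarrow> int) \<Rightarrow> bool" where
  "voting_output n q c x \<longleftrightarrow>
     (\<exists>F :: nat \<Rightarrow> nat \<Rightarrow> int.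
        (\<forall>p<n. \<forall>v<n. plurality_label n q c p v (F p v)) \<and>
        (\<exists>p<n. (\<forall>v<n. x v = F p v) \<and>
               (\<forall>p'<n. violations n q c (F p) \<le> violations n q c (F p'))))"

end

theory Submission
  imports Defs
begin

text \<open>Let y be an assignment with k \<le> \<epsilon> m violations and let p be a vertex of minimum
  y-degree d, so that n d \<le> 2 k.  Shift y to the assignment z with z p = 0.  With pivot p,
  the vote of u for v equals z v as soon as z satisfies the edges u v and p u.  Hence a vertex v
  whose FINAL label differs from z v (a misled vertex) has degree at least (n - 2)/2 - d, so the
  number s of misled vertices satisfies s (n - 2 - 2 d) \<le> 4 k.  Relabelling only misled vertices
  creates at most s^2 + 2 s d new violations: an agreeing neighbour u of a misled v can only
  violate u v if u = p, if z violates p u, or if u voted against FINAL v.  Both s and d are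
  O(\<epsilon> n), which produces the \<epsilon>^2 m term; for \<epsilon> \<ge> 1/16 the trivial bound m suffices.\<close>

definition violates :: "int \<Rightarrow> (nat \<Rightarrow> nat \<Rightarrow> int) \<Rightarrow> (nat \<Rightarrow> int) \<Rightarrow> nat \<Rightarrow> nat \<Rightarrow> bool" where
  "violates q c x v u \<longleftrightarrow> (x v - x u) mod q \<noteq> c v u mod q"

definition violation_degree :: "nat \<Rightarrow> int \<Rightarrow> (nat \<Rightarrow> nat \<Rightarrow> int) \<Rightarrow> (nat \<Rightarrow> int) \<Rightarrow> nat \<Rightarrow> nat" where
  "violation_degree n q c x v = card {u. u < n \<and> u \<noteq> v \<and> violates q c x v u}"

definition violations_between ::
    "int \<Rightarrow> (nat \<Rightarrow> nat \<Rightarrow> int) \<Rightarrow> (nat \<Rightarrow> int) \<Rightarrow> nat set \<Rightarrow> nat set \<Rightarrow> nat" where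
  "violations_between q c x A B = card {(v, u). v \<in> A \<and> u \<in> B \<and> u \<noteq> v \<and> violates q c x v u}"

lemma valid_instance_dvd_antisym:
  assumes "valid_instance n q c" "u < n" "v < n" "u \<noteq> v"
  shows "q dvd c u v + c v u"
  using assms unfolding valid_instance_def
  by (metis add.commute diff_minus_eq_add mod_eq_dvd_iff)

lemma violates_commute:
  assumes "valid_instance n q c" "u < n" "v < n" "u \<noteq> v"
  shows "violates q c x u v \<longleftrightarrow> violates q c x v u"
proof -
  have "q dvd c u v + c v u"
    using valid_instance_dvd_antisym[OF assms] .
  moreover have "x v - x u - c v u + (c u v + c v u) = - (x u - x v - c u v)"
    by simp
  ultimately have "q dvd x u - x v - c u v \<longleftrightarrow> q dvd x v - x u - c v u"
    by (metis dvd_add_left_iff dvd_minus_iff)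
  then show ?thesis
    unfolding violates_def by (simp add: mod_eq_dvd_iff)
qed

lemma violates_shift: "violates q c (\<lambda>v. (x v + t) mod q) v u \<longleftrightarrow> violates q c x v u"
proof -
  have "((x v + t) mod q - (x u + t) mod q) mod q = (x v - x u) mod q"
    by (simp add: mod_diff_eq)
  then show ?thesis
    unfolding violates_def by simp
qed

lemma violations_shift: "violations n q c (\<lambda>v. (x v + t) mod q) = violations n q c x"
  unfolding violations_def by (simp add: mod_diff_eq)

lemma violation_degree_shift: "violation_degree n q c (\<lambda>v. (x v + t) mod q) v = violation_degree n q c x v"
  unfolding violation_degree_def violates_shift ..

lemma violations_cong:
  assumes "\<And>v. v < n \<Longrightarrow> x v = x' v"
  shows "violations n q c x = violations n q c x'"
proof -
  have "\<And>u v. u < n \<Longrightarrow> v < n \<Longrightarrow> x u - x v = x' u - x' v"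
    using assms by simp
  then show ?thesis
    unfolding violations_def by (intro arg_cong[where f = card] Collect_cong) metis
qed

lemma violations_le_choose_two: "violations n q c x \<le> n choose 2"
proof -
  have "violations n q c x \<le> card {A. A \<subseteq> {..<n} \<and> card A = 2}"
    unfolding violations_def by (rule card_mono) auto
  then show ?thesis
    by (simp add: n_subsets)
qed

lemma finite_violations_between [simp]:
  "finite A \<Longrightarrow> finite B \<Longrightarrow> finite {(v, u). v \<in> A \<and> u \<in> B \<and> u \<noteq> v \<and> violates q c x v u}"
  by (rule finite_subset[of _ "A \<times> B"]) auto

lemma violations_between_eq_sum:
  assumes "finite A" "finite B"
  shows "violations_between q c x A B = (\<Sum>v\<in>A. card {u \<in> B. u \<noteq> v \<and> violates q c x v u})"
proof -
  have "{(v, u). v \<in> A \<and> u \<in> B \<and> u \<noteq> v \<and> violates q c x v u} =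
        Sigma A (\<lambda>v. {u \<in> B. u \<noteq> v \<and> violates q c x v u})"
    by auto
  then show ?thesis
    unfolding violations_between_def using assms by simp
qed

lemma sum_violation_degree:
  "finite A \<Longrightarrow> (\<Sum>v\<in>A. violation_degree n q c x v) = violations_between q c x A {..<n}"
  unfolding violations_between_eq_sum[OF _ finite_lessThan] violation_degree_def
  by (intro sum.cong refl arg_cong[where f = card]) auto

lemma violations_between_commute:
  assumes "valid_instance n q c" "A \<subseteq> {..<n}" "B \<subseteq> {..<n}"
  shows "violations_between q c x A B = violations_between q c x B A"
proof -
  let ?P = "\<lambda>A B. {(v, u). v \<in> A \<and> u \<in> B \<and> u \<noteq> v \<and> violates q c x v u}"
  have "prod.swap ` ?P A B = ?P B A"
    using assms violates_commute[OF assms(1)] by (fastforce simp: image_iff)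
  moreover have "card (prod.swap ` ?P A B) = card (?P A B)"
    by (rule card_image) simp
  ultimately show ?thesis
    unfolding violations_between_def by simp
qed

lemma violations_between_Un_left:
  assumes "finite A" "finite A'" "finite B" "A \<inter> A' = {}"
  shows "violations_between q c x (A \<union> A') B = violations_between q c x A B + violations_between q c x A' B"
proof -
  have "{(v, u). v \<in> A \<union> A' \<and> u \<in> B \<and> u \<noteq> v \<and> violates q c x v u} =
        {(v, u). v \<in> A \<and> u \<in> B \<and> u \<noteq> v \<and> violates q c x v u} \<union>
        {(v, u). v \<in> A' \<and> u \<in> B \<and> u \<noteq> v \<and> violates q c x v u}"
    by blast
  then show ?thesis
    unfolding violations_between_def using assms by (simp add: card_Un_disjoint disjoint_iff)
qed

lemma violations_between_Un_right:
  assumes "finite A" "finite B" "finite B'" "B \<inter> B' = {}"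
  shows "violations_between q c x A (B \<union> B') = violations_between q c x A B + violations_between q c x A B'"
proof -
  have "{(v, u). v \<in> A \<and> u \<in> B \<union> B' \<and> u \<noteq> v \<and> violates q c x v u} =
        {(v, u). v \<in> A \<and> u \<in> B \<and> u \<noteq> v \<and> violates q c x v u} \<union>
        {(v, u). v \<in> A \<and> u \<in> B' \<and> u \<noteq> v \<and> violates q c x v u}"
    by blast
  then show ?thesis
    unfolding violations_between_def using assms by (simp add: card_Un_disjoint disjoint_iff)
qed

lemma violations_between_partition:
  assumes "valid_instance n q c" "{..<n} = S \<union> T" "S \<inter> T = {}"
  shows "violations_between q c x {..<n} {..<n} =
    violations_between q c x T T + 2 * violations_between q c x S T + violations_between q c x S S"
proof -
  have fin: "finite S" "finite T"
    using assms(2) finite_lessThan[of n] by (metis finite_Un)+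
  have sub: "S \<subseteq> {..<n}" "T \<subseteq> {..<n}"
    using assms(2) by blast+
  show ?thesis
    using violations_between_commute[OF assms(1) sub]
    unfolding assms(2) using assms(3) fin
    by (simp add: violations_between_Un_left violations_between_Un_right Int_commute)
qed

lemma violations_between_le_square: "finite S \<Longrightarrow> violations_between q c x S S \<le> card S * card S - card S"
proof -
  assume "finite S"
  have "violations_between q c x S S \<le> (\<Sum>v\<in>S. card (S - {v}))"
    unfolding violations_between_eq_sum[OF \<open>finite S\<close> \<open>finite S\<close>]
    by (rule sum_mono, rule card_mono) (use \<open>finite S\<close> in auto)
  also have "\<dots> = card S * (card S - 1)"
    using \<open>finite S\<close> by simp
  finally show ?thesis
    by (simp add: right_diff_distrib')
qed

lemma two_violations_eq:
  assumes "valid_instance n q c"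
  shows "2 * violations n q c x = violations_between q c x {..<n} {..<n}"
proof -
  let ?P = "{(v, u). v \<in> {..<n} \<and> u \<in> {..<n} \<and> u \<noteq> v \<and> violates q c x v u}"
  let ?edge = "\<lambda>(v, u). {v, u :: nat}"
  have fin: "finite ?P"
    by (rule finite_subset[of _ "{..<n} \<times> {..<n}"]) auto
  have edges: "{e. \<exists>u v. e = {u, v} \<and> u < n \<and> v < n \<and> u \<noteq> v \<and>
                 (x u - x v) mod q \<noteq> c u v mod q} = ?edge ` ?P"
    unfolding violates_def by (auto simp: image_def)
  have fibre: "card {uv \<in> ?P. ?edge uv = e} = 2" if "e \<in> ?edge ` ?P" for e
  proof -
    obtain a b where ab: "a < n" "b < n" "b \<noteq> a" "violates q c x a b" "e = {a, b}"
      using \<open>e \<in> ?edge ` ?P\<close> by auto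
    then have "violates q c x b a"
      using violates_commute[OF assms] by blast
    with ab have "{uv \<in> ?P. ?edge uv = e} = {(a, b), (b, a)}"
      by (auto simp: doubleton_eq_iff)
    then show ?thesis
      using ab by simp
  qed
  have "card ?P = (\<Sum>e\<in>?edge ` ?P. card {uv \<in> ?P. ?edge uv = e})"
    using sum.group[OF fin finite_imageI[OF fin] subset_refl, where h = "\<lambda>_. 1::nat" and g = ?edge]
    by simp
  also have "\<dots> = 2 * card (?edge ` ?P)"
    using fibre by simp
  finally show ?thesis
    unfolding violations_def edges violations_between_def by simp
qed

lemma low_violation_degree_vertex:
  assumes "valid_instance n q c" "0 < n"
  obtains p where "p < n" "n * violation_degree n q c x p \<le> 2 * violations n q c x"
proof -
  obtain p where p: "p < n" "\<And>v. v < n \<Longrightarrow> violation_degree n q c x p \<le> violation_degree n q c x v"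
    using ex_has_least_nat[of "\<lambda>p. p < n" 0 "violation_degree n q c x"] assms(2) by auto
  have "(\<Sum>v<n. violation_degree n q c x p) \<le> (\<Sum>v<n. violation_degree n q c x v)"
    using p(2) by (intro sum_mono) auto
  then show ?thesis
    using that[OF p(1)]
    unfolding two_violations_eq[OF assms(1)] sum_violation_degree[OF finite_lessThan] by simp
qed

locale pivot_voting =
  fixes n :: nat and q :: int and c :: "nat \<Rightarrow> nat \<Rightarrow> int" and p :: nat
    and F :: "nat \<Rightarrow> int" and z :: "nat \<Rightarrow> int"
  assumes valid: "valid_instance n q c"
    and three_le_n: "3 \<le> n"
    and pivot: "p < n"
    and plurality: "\<And>v. v < n \<Longrightarrow> plurality_label n q c p v (F v)"
    and reference: "assignment n q z"
    and reference_pivot: "z p = 0"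
begin

definition vote :: "nat \<Rightarrow> nat \<Rightarrow> int" where
  "vote v u = (c v u + c u p) mod q"

definition voters :: "nat \<Rightarrow> nat set" where
  "voters v = {u. u < n \<and> u \<noteq> p \<and> u \<noteq> v}"

definition misled :: "nat set" where
  "misled = {v. v < n \<and> F v \<noteq> z v}"

definition agreeing :: "nat set" where
  "agreeing = {v. v < n \<and> F v = z v}"

abbreviation deg :: "(nat \<Rightarrow> int) \<Rightarrow> nat \<Rightarrow> nat" where
  "deg \<equiv> violation_degree n q c"

lemma q_pos: "0 < q"
  using valid unfolding valid_instance_def by simp

lemma finite_voters [simp]: "finite (voters v)"
  unfolding voters_def by simp

lemma card_voters: "v < n \<Longrightarrow> v \<noteq> p \<Longrightarrow> card (voters v) = n - 2"
proof -
  assume "v < n" "v \<noteq> p"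
  have "voters v = {..<n} - {p, v}"
    unfolding voters_def by auto
  then show ?thesis
    using \<open>v < n\<close> \<open>v \<noteq> p\<close> pivot by (simp add: card_Diff_subset)
qed

lemma vote_count_eq: "vote_count n q c p v a = card {u \<in> voters v. vote v u = a}"
  unfolding vote_count_def voters_def vote_def by (rule arg_cong[where f = card]) auto

lemma vote_count_reference_le: "v < n \<Longrightarrow> vote_count n q c p v (z v) \<le> vote_count n q c p v (F v)"
  using plurality reference unfolding plurality_label_def assignment_def by blast

lemma F_pivot_eq_0: "F p = 0"
proof -
  have vote_p: "vote p u = 0" if "u \<in> voters p" for u
    using valid_instance_dvd_antisym[OF valid pivot] that unfolding vote_def voters_def by auto
  have "(if p = 0 then 1 else 0) \<in> voters p"
    using three_le_n unfolding voters_def by auto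
  then have "0 < card {u \<in> voters p. vote p u = 0}"
    using vote_p by (subst card_gt_0_iff) auto
  also have "\<dots> \<le> vote_count n q c p p (F p)"
    using plurality[OF pivot] q_pos unfolding plurality_label_def vote_count_eq by auto
  finally have "{u \<in> voters p. vote p u = F p} \<noteq> {}"
    unfolding vote_count_eq by (metis card.empty less_irrefl)
  then obtain u where "u \<in> voters p" "vote p u = F p"
    by blast
  then show ?thesis
    using vote_p by simp
qed

lemma vote_eq_reference:
  assumes "u \<in> voters v" "v < n" "\<not> violates q c z v u" "\<not> violates q c z p u"
  shows "vote v u = z v"
proof -
  have "q dvd z v - z u - c v u" "q dvd - z u - c p u"
    using assms(3,4) reference_pivot unfolding violates_def by (simp_all add: mod_eq_dvd_iff)
  moreover have "q dvd c p u + c u p"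
    using valid_instance_dvd_antisym[OF valid pivot] assms(1) unfolding voters_def by auto
  moreover have "(c v u + c u p) - z v = - (z v - z u - c v u) + (c p u + c u p) + (- z u - c p u)"
    by simp
  ultimately have "q dvd (c v u + c u p) - z v"
    by (metis dvd_add dvd_minus_iff)
  then have "vote v u = z v mod q"
    unfolding vote_def by (simp add: mod_eq_dvd_iff)
  then show ?thesis
    using reference assms(2) unfolding assignment_def by simp
qed

lemma vote_consistent:
  assumes "u \<in> voters v" "F u = z u" "\<not> violates q c z p u" "vote v u = F v"
  shows "\<not> violates q c F v u"
proof -
  have "q dvd c v u + c u p - F v"
    using assms(4) unfolding vote_def by (metis mod_mod_trivial mod_eq_dvd_iff)
  moreover have "q dvd - z u - c p u"
    using assms(3) reference_pivot unfolding violates_def by (simp add: mod_eq_dvd_iff)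
  moreover have "q dvd c p u + c u p"
    using valid_instance_dvd_antisym[OF valid pivot] assms(1) unfolding voters_def by auto
  moreover have "F v - F u - c v u = - (c v u + c u p - F v) + (c p u + c u p) + (- z u - c p u)"
    using assms(2) by simp
  ultimately have "q dvd F v - F u - c v u"
    by (metis dvd_add dvd_minus_iff)
  then show ?thesis
    unfolding violates_def by (simp add: mod_eq_dvd_iff)
qed

lemma vote_count_reference_ge:
  assumes "v < n" "v \<noteq> p"
  shows "n - 2 \<le> vote_count n q c p v (z v) + deg z v + deg z p"
proof -
  let ?B = "\<lambda>w. {u. u < n \<and> u \<noteq> w \<and> violates q c z w u}"
  have "voters v \<subseteq> {u \<in> voters v. vote v u = z v} \<union> ?B v \<union> ?B p"
    using vote_eq_reference assms(1) unfolding voters_def by blast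
  then have "card (voters v) \<le> card ({u \<in> voters v. vote v u = z v} \<union> ?B v \<union> ?B p)"
    by (rule card_mono[rotated]) simp
  also have "\<dots> \<le> card {u \<in> voters v. vote v u = z v} + card (?B v) + card (?B p)"
    by (meson card_Un_le add_le_mono1 order_trans)
  finally show ?thesis
    using card_voters[OF assms] unfolding vote_count_eq violation_degree_def by simp
qed

lemma vote_count_add_le:
  assumes "v < n" "v \<noteq> p" "a \<noteq> b"
  shows "vote_count n q c p v a + vote_count n q c p v b \<le> n - 2"
proof -
  have "vote_count n q c p v a + vote_count n q c p v b =
        card ({u \<in> voters v. vote v u = a} \<union> {u \<in> voters v. vote v u = b})"
    unfolding vote_count_eq using assms(3) by (subst card_Un_disjoint) auto
  also have "\<dots> \<le> card (voters v)"
    by (rule card_mono) auto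
  finally show ?thesis
    using card_voters[OF assms(1,2)] by simp
qed

lemma misled_not_pivot: "v \<in> misled \<Longrightarrow> v \<noteq> p"
  using F_pivot_eq_0 reference_pivot unfolding misled_def by auto

lemma misled_degree_ge:
  assumes "v \<in> misled"
  shows "n - 2 \<le> 2 * deg z v + 2 * deg z p"
proof -
  have v: "v < n" "v \<noteq> p" "F v \<noteq> z v"
    using assms misled_not_pivot unfolding misled_def by auto
  show ?thesis
    using vote_count_reference_le[OF v(1)] vote_count_add_le[OF v] vote_count_reference_ge[OF v(1,2)]
    by linarith
qed

text \<open>The three summands count u = p, the edges p u violated by z, and the votes against F v,
  of which there are at most deg z v + deg z p.\<close>
lemma misled_edges_to_agreeing_le:
  assumes "v \<in> misled"
  shows "card {u. u < n \<and> F u = z u \<and> u \<noteq> v \<and> violates q c F v u} \<le> deg z v + 2 * deg z p + 1"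
proof -
  have v: "v < n" "v \<noteq> p" "F v \<noteq> z v"
    using assms misled_not_pivot unfolding misled_def by auto
  let ?C = "{u. u < n \<and> u \<noteq> p \<and> violates q c z p u}"
  let ?W = "{u \<in> voters v. vote v u \<noteq> F v}"
  have "{u. u < n \<and> F u = z u \<and> u \<noteq> v \<and> violates q c F v u} \<subseteq> {p} \<union> ?C \<union> ?W"
  proof
    fix u assume u: "u \<in> {u. u < n \<and> F u = z u \<and> u \<noteq> v \<and> violates q c F v u}"
    show "u \<in> {p} \<union> ?C \<union> ?W"
    proof (cases "u = p \<or> violates q c z p u")
      case False
      then have "u \<in> voters v"
        using u unfolding voters_def by simp
      then show ?thesis
        using u False vote_consistent[of u v] by auto
    qed (use u in auto)
  qed
  then have "card {u. u < n \<and> F u = z u \<and> u \<noteq> v \<and> violates q c F v u} \<le> card ({p} \<union> ?C \<union> ?W)"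
    by (rule card_mono[rotated]) simp
  also have "\<dots> \<le> card ({p} \<union> ?C) + card ?W"
    by (rule card_Un_le)
  also have "\<dots> \<le> 1 + card ?C + card ?W"
    using card_Un_le[of "{p}" ?C] by simp
  also have "card ?W + vote_count n q c p v (F v) = card (voters v)"
    unfolding vote_count_eq by (subst card_Un_disjoint[symmetric]) (auto intro: arg_cong[where f = card])
  moreover have "card ?C = deg z p"
    unfolding violation_degree_def by (rule arg_cong[where f = card]) auto
  ultimately show ?thesis
    using vote_count_reference_le[OF v(1)] vote_count_reference_ge[OF v(1,2)] card_voters[OF v(1,2)]
    by linarith
qed

lemma misled_agreeing_partition:
  "{..<n} = misled \<union> agreeing" "misled \<inter> agreeing = {}" "finite misled" "finite agreeing"
  unfolding misled_def agreeing_def by auto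

lemma violations_between_agreeing:
  "violations_between q c F agreeing agreeing = violations_between q c z agreeing agreeing"
  unfolding violations_between_def agreeing_def violates_def
  by (rule arg_cong[where f = card]) auto

lemma violations_between_misled_agreeing_le:
  "violations_between q c F misled agreeing
     \<le> violations_between q c z misled agreeing + violations_between q c z misled misled
       + 2 * card misled * deg z p + card misled"
proof -
  note fin = misled_agreeing_partition(3,4)
  have "violations_between q c F misled agreeing
        = (\<Sum>v\<in>misled. card {u \<in> agreeing. u \<noteq> v \<and> violates q c F v u})"
    by (rule violations_between_eq_sum[OF fin])
  also have "\<dots> = (\<Sum>v\<in>misled. card {u. u < n \<and> F u = z u \<and> u \<noteq> v \<and> violates q c F v u})"
    unfolding agreeing_def by (intro sum.cong refl arg_cong[where f = card]) auto
  also have "\<dots> \<le> (\<Sum>v\<in>misled. deg z v + (2 * deg z p + 1))"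
    by (intro sum_mono) (use misled_edges_to_agreeing_le in auto)
  also have "\<dots> = violations_between q c z misled {..<n} + 2 * card misled * deg z p + card misled"
    unfolding sum.distrib sum_violation_degree[OF fin(1)] by simp
  also have "violations_between q c z misled {..<n}
             = violations_between q c z misled agreeing + violations_between q c z misled misled"
    using violations_between_Un_right[OF fin(1,2,1)] misled_agreeing_partition(1,2)
    by (simp add: Un_commute Int_commute)
  finally show ?thesis .
qed

lemma violations_F_le:
  "violations n q c F \<le> violations n q c z + card misled ^ 2 + 2 * card misled * deg z p"
proof -
  let ?s = "card misled" and ?vb = "violations_between q c"
  have "2 * violations n q c F = ?vb F agreeing agreeing + 2 * ?vb F misled agreeing + ?vb F misled misled"
    "2 * violations n q c z = ?vb z agreeing agreeing + 2 * ?vb z misled agreeing + ?vb z misled misled"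
    unfolding two_violations_eq[OF valid]
    by (rule violations_between_partition[OF valid misled_agreeing_partition(1,2)])+
  moreover have "?vb F misled misled \<le> ?s * ?s - ?s" "?vb z misled misled \<le> ?s * ?s - ?s"
    using misled_agreeing_partition(3) by (simp_all add: violations_between_le_square)
  moreover have "?s * ?s - ?s + ?s = ?s * ?s"
    by simp
  ultimately show ?thesis
    using violations_between_agreeing violations_between_misled_agreeing_le
    unfolding power2_eq_square by linarith
qed

lemma card_misled_le:
  "card misled * (n - 2) \<le> 4 * violations n q c z + 2 * card misled * deg z p"
proof -
  note fin = misled_agreeing_partition(3)
  have "card misled * (n - 2) \<le> (\<Sum>v\<in>misled. 2 * deg z v + 2 * deg z p)"
    using sum_mono[of misled "\<lambda>_. n - 2", OF misled_degree_ge] by simp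
  also have "\<dots> = 2 * (\<Sum>v\<in>misled. deg z v) + 2 * card misled * deg z p"
    by (simp add: sum.distrib sum_distrib_left)
  also have "(\<Sum>v\<in>misled. deg z v) \<le> (\<Sum>v<n. deg z v)"
    by (rule sum_mono2) (auto simp: misled_def)
  also have "\<dots> = 2 * violations n q c z"
    by (simp add: sum_violation_degree two_violations_eq[OF valid])
  finally show ?thesis
    by simp
qed

end

lemma pivot_output_bound:
  assumes "valid_instance n q c" "3 \<le> n" "p < n" "\<And>v. v < n \<Longrightarrow> plurality_label n q c p v (F v)"
  obtains s where
    "violations n q c F \<le> violations n q c y + s\<^sup>2 + 2 * s * violation_degree n q c y p"
    "s * (n - 2) \<le> 4 * violations n q c y + 2 * s * violation_degree n q c y p"
proof -
  define z where "z v = (y v + - y p) mod q" for v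
  have "0 < q"
    using assms(1) unfolding valid_instance_def by simp
  then interpret pivot_voting n q c p F z
    using assms by unfold_locales (simp_all add: z_def assignment_def)
  show ?thesis
    using that violations_F_le card_misled_le
    unfolding z_def violations_shift violation_degree_shift by blast
qed

lemma real_choose_two: "real (n choose 2) = real n * (real n - 1) / 2"
  by (cases n) (simp_all add: choose_two real_of_nat_div field_simps)

definition voting_constant :: "real \<Rightarrow> real" where
  "voting_constant e = 16 * (1 + sqrt e) / (1 - sqrt e - 2 * e)\<^sup>2"

lemma voting_constant_tendsto: "(voting_constant \<longlongrightarrow> 16) (at_right 0)"
proof -
  have "((\<lambda>e. 16 * (1 + sqrt e) / (1 - sqrt e - 2 * e)\<^sup>2) \<longlongrightarrow>
          16 * (1 + sqrt 0) / (1 - sqrt 0 - 2 * 0)\<^sup>2) (at_right (0::real))"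
    by (intro tendsto_intros) (auto intro!: tendsto_ident_at)
  then show ?thesis
    unfolding voting_constant_def by simp
qed

lemma voting_constant_nonneg: "0 \<le> e \<Longrightarrow> 0 \<le> voting_constant e"
  unfolding voting_constant_def by simp

text \<open>This absorbs the additive constants in n - 2 - 2 d and in n = (n - 1) + 1, and is
  where the factor 1 + sqrt e in voting_constant comes from.\<close>
lemma one_le_sqrt_mult:
  fixes e n k :: real
  assumes "0 \<le> e" "3 \<le> n" "1 \<le> k" "k \<le> e * (n * (n - 1) / 2)"
  shows "1 \<le> sqrt e * (n - 1)"
proof -
  have "1 \<le> e * (n * (n - 1) / 2)"
    using assms(3,4) by simp
  also have "\<dots> = e * ((n / 2) * (n - 1))"
    by simp
  also have "\<dots> \<le> e * ((n - 1) * (n - 1))"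
    using assms(1,2) by (intro mult_left_mono mult_right_mono) auto
  also have "\<dots> = (sqrt e * (n - 1))\<^sup>2"
    using assms(1) by (simp add: power_mult_distrib power2_eq_square)
  finally have "1\<^sup>2 \<le> (sqrt e * (n - 1))\<^sup>2"
    by simp
  moreover have "0 \<le> sqrt e * (n - 1)"
    using assms(1,2) by simp
  ultimately show ?thesis
    by (rule power2_le_imp_le)
qed

lemma misled_count_le_real:
  fixes e n k d s :: real
  assumes e: "0 \<le> e" and n: "3 \<le> n" and k: "1 \<le> k" "k \<le> e * (n * (n - 1) / 2)"
    and d: "n * d \<le> 2 * k"
    and s: "0 \<le> s" "s * (n - 2 - 2 * d) \<le> 4 * k"
  shows "d \<le> e * (n - 1)" "s * (1 - sqrt e - 2 * e) \<le> 2 * e * n"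
proof -
  define N where "N = n - 1"
  have "n * d \<le> n * (e * N)"
    using d k unfolding N_def by (simp add: algebra_simps)
  then show dN: "d \<le> e * (n - 1)"
    using n unfolding N_def by simp
  have "N * (1 - sqrt e - 2 * e) \<le> n - 2 - 2 * d"
    using one_le_sqrt_mult[OF e n k] dN unfolding N_def by (simp add: algebra_simps)
  then have "s * (N * (1 - sqrt e - 2 * e)) \<le> s * (n - 2 - 2 * d)"
    using s(1) by (rule mult_left_mono)
  also have "\<dots> \<le> 4 * k"
    by (rule s(2))
  also have "\<dots> \<le> N * (2 * e * n)"
    using k unfolding N_def by simp
  finally have "N * (s * (1 - sqrt e - 2 * e)) \<le> N * (2 * e * n)"
    by (simp only: mult.left_commute)
  moreover have "0 < N"
    using n unfolding N_def by simp
  ultimately show "s * (1 - sqrt e - 2 * e) \<le> 2 * e * n"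
    by (rule mult_left_le_imp_le)
qed

lemma excess_le_voting_constant:
  fixes e n k d s :: real
  assumes e: "0 \<le> e" "e < 1/16" and n: "3 \<le> n" and k: "1 \<le> k" "k \<le> e * (n * (n - 1) / 2)"
    and d: "0 \<le> d" "n * d \<le> 2 * k"
    and s: "0 \<le> s" "s * (n - 2 - 2 * d) \<le> 4 * k"
  shows "s\<^sup>2 + 2 * s * d \<le> voting_constant e * e\<^sup>2 * (n * (n - 1) / 2)"
proof -
  define N a b where "N = n - 1" and "a = sqrt e" and "b = 1 - a - 2 * e"
  have "sqrt e < sqrt ((1/4)\<^sup>2)"
    by (rule real_sqrt_less_mono) (use e in \<open>simp add: power2_eq_square\<close>)
  then have a: "0 \<le> a" "a < 1/4"
    using e unfolding a_def by simp_all
  have b: "0 < b" "b \<le> 1 + a"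
    using a e unfolding b_def by auto
  have dN: "d \<le> e * N" and "s * b \<le> 2 * e * n"
    using misled_count_le_real[OF e(1) n k d(2) s] unfolding N_def a_def b_def by auto
  then have sb: "s \<le> 2 * e * n / b"
    using b by (simp add: pos_le_divide_eq)
  have inv_b: "1 / b \<le> (1 + a) / b\<^sup>2"
    using b by (simp add: field_simps power2_eq_square)
  have n_le: "n \<le> (1 + a) * N"
    using one_le_sqrt_mult[OF e(1) n k] unfolding a_def N_def by (simp add: algebra_simps)
  have "s\<^sup>2 + 2 * s * d = s * (s + 2 * d)"
    by (simp add: power2_eq_square algebra_simps)
  also have "\<dots> \<le> (2 * e * n / b) * (2 * e * n / b + 2 * (e * N))"
    using sb dN s d by (intro mult_mono add_mono) auto
  also have "\<dots> = 4 * e\<^sup>2 * n * (n / b\<^sup>2 + N * (1 / b))"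
    using b by (simp add: field_simps power2_eq_square)
  also have "\<dots> \<le> 4 * e\<^sup>2 * n * ((1 + a) * N / b\<^sup>2 + N * ((1 + a) / b\<^sup>2))"
    using n_le inv_b n unfolding N_def by (intro mult_left_mono add_mono divide_right_mono) auto
  also have "\<dots> = voting_constant e * e\<^sup>2 * (n * N / 2)"
    unfolding voting_constant_def a_def[symmetric] b_def[symmetric] using b by (simp add: field_simps)
  finally show ?thesis
    unfolding N_def .
qed

lemma voting_output_violations_le:
  assumes valid: "valid_instance n q c" and n: "3 \<le> n" and e: "0 \<le> e" "e < 1/16"
    and y: "real (violations n q c y) \<le> e * real (n choose 2)"
    and x: "voting_output n q c x"
  shows "real (violations n q c x) \<le> (e + voting_constant e * e\<^sup>2) * real (n choose 2)"
proof -
  obtain F p0 where plurality: "\<And>p v. p < n \<Longrightarrow> v < n \<Longrightarrow> plurality_label n q c p v (F p v)"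
    and p0: "\<And>v. v < n \<Longrightarrow> x v = F p0 v" "\<And>p. p < n \<Longrightarrow> violations n q c (F p0) \<le> violations n q c (F p)"
    using x unfolding voting_output_def by blast
  obtain p where p: "p < n" and nd: "n * violation_degree n q c y p \<le> 2 * violations n q c y"
    using low_violation_degree_vertex[OF valid] n by auto
  obtain s where
    growth: "violations n q c (F p) \<le> violations n q c y + s\<^sup>2 + 2 * s * violation_degree n q c y p" and
    misled: "s * (n - 2) \<le> 4 * violations n q c y + 2 * s * violation_degree n q c y p"
    using pivot_output_bound[OF valid n p plurality[OF p]] .
  define k d where "k = violations n q c y" and "d = violation_degree n q c y p"
  have "real (violations n q c x) \<le> real (violations n q c (F p))"
    using violations_cong[OF p0(1)] p0(2)[OF p] by simp
  also have "\<dots> \<le> real k + ((real s)\<^sup>2 + 2 * real s * real d)"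
    using growth unfolding k_def d_def of_nat_le_iff[symmetric, where 'a = real] by simp
  also have "\<dots> \<le> e * real (n choose 2) + voting_constant e * e\<^sup>2 * real (n choose 2)"
  proof (cases "k = 0")
    case True
    then have "d = 0"
      using nd n unfolding k_def d_def by simp
    then have "s = 0"
      using misled n True unfolding k_def d_def by simp
    then show ?thesis
      using True \<open>d = 0\<close> voting_constant_nonneg[OF e(1)] e(1) by simp
  next
    case False
    have "real n * real d \<le> 2 * real k"
      using nd unfolding k_def d_def of_nat_le_iff[symmetric, where 'a = real] by simp
    moreover have "real s * (real n - 2 - 2 * real d) \<le> 4 * real k"
      using misled n unfolding k_def d_def of_nat_le_iff[symmetric, where 'a = real]
      by (simp add: of_nat_diff algebra_simps)
    ultimately show ?thesis
      using excess_le_voting_constant[OF e, of "real n" "real k" "real d" "real s"] y n False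
      unfolding k_def real_choose_two by simp
  qed
  finally show ?thesis
    by (simp add: algebra_simps)
qed

lemma violations_le_large_eps:
  assumes "1/16 \<le> e"
  shows "real (violations n q c x) \<le> (e + 256 * e\<^sup>2) * real (n choose 2)"
proof -
  have "(1/16)\<^sup>2 \<le> e\<^sup>2"
    using assms by (intro power_mono) auto
  then have "1 * real (n choose 2) \<le> (e + 256 * e\<^sup>2) * real (n choose 2)"
    using assms by (intro mult_right_mono) (auto simp: power2_eq_square)
  then show ?thesis
    using violations_le_choose_two[of n q c x] by simp
qed

theorem theorem2:
  shows "\<exists>ce :: real \<Rightarrow> real. (ce \<longlongrightarrow> 16) (at_right 0) \<and>
    (\<forall>(\<epsilon>::real) (n::nat) (q::int) (c :: nat \<Rightarrow> nat \<Rightarrow> int) (x :: nat \<Rightarrow> int).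
       0 \<le> \<epsilon> \<and> \<epsilon> < 1/2 \<and> n \<ge> 3 \<and> valid_instance n q c \<and>
       (\<exists>y. assignment n q y \<and> real (violations n q c y) \<le> \<epsilon> * real (n choose 2)) \<and>
       voting_output n q c x
       \<longrightarrow> real (violations n q c x) \<le> (\<epsilon> + ce \<epsilon> * \<epsilon>\<^sup>2) * real (n choose 2))"
proof -
  define ce :: "real \<Rightarrow> real" where "ce e = (if e < 1/16 then voting_constant e else 256)" for e
  have "eventually (\<lambda>e. voting_constant e = ce e) (at_right 0)"
    using eventually_at_right_real[of 0 "1/16::real"] unfolding ce_def by (auto elim: eventually_mono)
  then have "(ce \<longlongrightarrow> 16) (at_right 0)"
    by (rule Lim_transform_eventually[OF voting_constant_tendsto])
  moreover have "real (violations n q c x) \<le> (e + ce e * e\<^sup>2) * real (n choose 2)"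
    if e: "0 \<le> e" and n: "3 \<le> n" and valid: "valid_instance n q c" and x: "voting_output n q c x"
      and y: "real (violations n q c y) \<le> e * real (n choose 2)"
    for e n q c x y
    using voting_output_violations_le[OF valid n e _ y x] violations_le_large_eps[of e n q c x]
    unfolding ce_def by (cases "e < 1/16") auto
  ultimately show ?thesis
    by blast
qed

end
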